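(* Let $W$ be an irreducible Coxeter group with generators $s_1,\dots,s_n$ and relations $s_i^2=e$, $(s_is_j)^{m_{ij}}=e$ ($m_{ij}\in\{2,3,\dots\}\cup\{\infty\}$). The following are equivalent: (a) $W$ is finite; (b) there exists an admissible E-GCM graph whose associated Coxeter group is $W$; (c) every E-GCM graph whose associated Coxeter group is $W$ is admissible.
   Context: An E-GCM is a real $n\times n$ matrix $M=(M_{ij})$ with $M_{ii}=2$, $M_{ij}\le 0$ ($i\ne j$), $M_{ij}\ne0\iff M_{ji}\ne0$, and nonzero $M_{ij}M_{ji}$ either $\ge 4$ or $=4\cos^2(\pi/m)$ for an integer $m\ge3$. Its E-GCM graph $(\Gamma,M)$ has nodes $\gamma_i$, adjacent iff $M_{ij}\ne0$. Its associated Coxeter group $W(\Gamma,M)$ has generators $s_i$ and relations $s_i^2=e$, $(s_is_j)^{m_{ij}}=e$ with $m_{ij}=k$ if $M_{ij}M_{ji}=4\cos^2(\pi/k)$ ($k\ge2$ integer) and $m_{ij}=\infty$ if $M_{ij}M_{ji}\ge 4$; "associated Coxeter group is $W$" means these $m_{ij}$ coincide with those of $W$ (after identifying nodes with generators). $W$ irreducible means the graph on $\{1,\dots,n\}$ with $i\sim j$ iff $m_{ij}\ge3$ is connected (equivalently $\Gamma$ is connected). Numbers game: positions $\lambda\in\mathbb{R}^n$; firing $\gamma_i$ (allowed iff $\lambda_i>0$) replaces each $\lambda_j$ by $\lambda_j-M_{ij}\lambda_i$; a game repeatedly fires nodes with positive population while any exist; a game sequence is convergent if finite. A connected E-GCM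 graph is admissible if some nonzero position with all $\lambda_i\ge0$ has a convergent game sequence. *)

theory Defs
  imports Complex_Main "HOL-Library.Extended_Nat"
begin

definition coxeter_matrix :: "nat \<Rightarrow> (nat \<Rightarrow> nat \<Rightarrow> enat) \<Rightarrow> bool" where
  "coxeter_matrix n m \<longleftrightarrow>
     (\<forall>i<n. \<forall>j<n. i \<noteq> j \<longrightarrow> m i j = m j i \<and> m i j \<ge> 2)"

definition cox_adj :: "nat \<Rightarrow> (nat \<Rightarrow> nat \<Rightarrow> enat) \<Rightarrow> nat \<Rightarrow> nat \<Rightarrow> bool" where
  "cox_adj n m i j \<longleftrightarrow> i < n \<and> j < n \<and> i \<noteq> j \<and> m i j \<ge> 3"

definition coxeter_irreducible :: "nat \<Rightarrow> (nat \<Rightarrow> nat \<Rightarrow> enat) \<Rightarrow> bool" where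
  "coxeter_irreducible n m \<longleftrightarrow> n \<ge> 1 \<and> (\<forall>i<n. \<forall>j<n. (cox_adj n m)\<^sup>*\<^sup>* i j)"

text \<open>Since all generators are involutions, words without inverses suffice.\<close>

definition relators :: "nat \<Rightarrow> (nat \<Rightarrow> nat \<Rightarrow> enat) \<Rightarrow> nat list set" where
  "relators n m = {[i, i] | i. i < n} \<union>
     {concat (replicate k [i, j]) | i j k. i < n \<and> j < n \<and> i \<noteq> j \<and> m i j = enat k}"

definition cox_step :: "nat \<Rightarrow> (nat \<Rightarrow> nat \<Rightarrow> enat) \<Rightarrow> (nat list \<times> nat list) set" where
  "cox_step n m = {(u @ r @ v, u @ v) | u r v.
      r \<in> relators n m \<and> set u \<subseteq> {..<n} \<and> set v \<subseteq> {..<n}}"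

definition cox_rel :: "nat \<Rightarrow> (nat \<Rightarrow> nat \<Rightarrow> enat) \<Rightarrow> (nat list \<times> nat list) set" where
  "cox_rel n m = (cox_step n m \<union> (cox_step n m)\<inverse>)\<^sup>*"

definition coxeter_group :: "nat \<Rightarrow> (nat \<Rightarrow> nat \<Rightarrow> enat) \<Rightarrow> nat list set set" where
  "coxeter_group n m = lists {..<n} // cox_rel n m"

definition egcm :: "nat \<Rightarrow> (nat \<Rightarrow> nat \<Rightarrow> real) \<Rightarrow> bool" where
  "egcm n M \<longleftrightarrow>
     (\<forall>i<n. M i i = 2) \<and>
     (\<forall>i<n. \<forall>j<n. i \<noteq> j \<longrightarrow>
        M i j \<le> 0 \<and> (M i j \<noteq> 0 \<longleftrightarrow> M j i \<noteq> 0) \<and>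
        (M i j * M j i \<noteq> 0 \<longrightarrow>
           M i j * M j i \<ge> 4 \<or> (\<exists>k::nat. k \<ge> 3 \<and> M i j * M j i = 4 * (cos (pi / k))\<^sup>2)))"

definition egcm_assoc :: "nat \<Rightarrow> (nat \<Rightarrow> nat \<Rightarrow> real) \<Rightarrow> (nat \<Rightarrow> nat \<Rightarrow> enat) \<Rightarrow> bool" where
  "egcm_assoc n M m \<longleftrightarrow>
     (\<forall>i<n. \<forall>j<n. i \<noteq> j \<longrightarrow>
        (m i j = \<infinity> \<longleftrightarrow> M i j * M j i \<ge> 4) \<and>
        (\<forall>k::nat. m i j = enat k \<longrightarrow> k \<ge> 2 \<and> M i j * M j i = 4 * (cos (pi / k))\<^sup>2))"

definition egcm_adj :: "nat \<Rightarrow> (nat \<Rightarrow> nat \<Rightarrow> real) \<Rightarrow> nat \<Rightarrow> nat \<Rightarrow> bool" where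
  "egcm_adj n M i j \<longleftrightarrow> i < n \<and> j < n \<and> i \<noteq> j \<and> M i j \<noteq> 0"

definition egcm_connected :: "nat \<Rightarrow> (nat \<Rightarrow> nat \<Rightarrow> real) \<Rightarrow> bool" where
  "egcm_connected n M \<longleftrightarrow> n \<ge> 1 \<and> (\<forall>i<n. \<forall>j<n. (egcm_adj n M)\<^sup>*\<^sup>* i j)"

text \<open>Numbers game. Positions are functions nat \<Rightarrow> real (only indices < n matter).\<close>

definition fire :: "(nat \<Rightarrow> nat \<Rightarrow> real) \<Rightarrow> nat \<Rightarrow> (nat \<Rightarrow> real) \<Rightarrow> (nat \<Rightarrow> real)" where
  "fire M i lam = (\<lambda>j. lam j - M i j * lam i)"

fun legal_play :: "nat \<Rightarrow> (nat \<Rightarrow> nat \<Rightarrow> real) \<Rightarrow> (nat \<Rightarrow> real) \<Rightarrow> nat list \<Rightarrow> bool" where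
  "legal_play n M lam [] = True"
| "legal_play n M lam (i # is) = (i < n \<and> lam i > 0 \<and> legal_play n M (fire M i lam) is)"

fun play :: "(nat \<Rightarrow> nat \<Rightarrow> real) \<Rightarrow> (nat \<Rightarrow> real) \<Rightarrow> nat list \<Rightarrow> (nat \<Rightarrow> real)" where
  "play M lam [] = lam"
| "play M lam (i # is) = play M (fire M i lam) is"

definition convergent_game :: "nat \<Rightarrow> (nat \<Rightarrow> nat \<Rightarrow> real) \<Rightarrow> (nat \<Rightarrow> real) \<Rightarrow> nat list \<Rightarrow> bool" where
  "convergent_game n M lam is \<longleftrightarrow>
     legal_play n M lam is \<and> (\<forall>i<n. play M lam is i \<le> 0)"

definition admissible :: "nat \<Rightarrow> (nat \<Rightarrow> nat \<Rightarrow> real) \<Rightarrow> bool" where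
  "admissible n M \<longleftrightarrow> egcm_connected n M \<and>
     (\<exists>lam. (\<forall>i<n. lam i \<ge> 0) \<and> (\<exists>i<n. lam i \<noteq> 0) \<and> (\<exists>is. convergent_game n M lam is))"

end

theory Submission
  imports Defs "HOL-Computational_Algebra.Polynomial" "HOL-Library.FuncSet"
begin

text \<open>Firing node \<open>i\<close> acts on positions by the reflection \<open>\<lambda> \<mapsto> \<lambda> - \<lambda>\<^sub>i M\<^sub>i\<close>, where
  \<open>M\<^sub>i\<close> is the \<open>i\<close>-th row of \<open>M\<close>. On a pair of nodes the alternating product of two
  firings has order \<open>m\<^sub>i\<^sub>j\<close> (a Chebyshev recurrence with angle \<open>2\<pi>/m\<^sub>i\<^sub>j\<close>), so the
  plays form an action of \<open>W\<close> through a group \<open>G\<close> of affine maps.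

  If \<open>W\<close> is finite, so is \<open>G\<close>; averaging the standard inner product over \<open>G\<close> gives an
  invariant form \<open>B\<close>, and every legal firing strictly lowers \<open>B(\<lambda>, 1)\<close> inside the
  finite orbit, so every game stops.

  Conversely, suppose a game from a nonzero dominant \<open>\<lambda>\<close> stops. Eriksson's strong
  convergence theorem, proved by exchanging first moves along braid relations, shows
  that the orbit of \<open>\<lambda>\<close> is reached by legal plays no longer than that game, so it is
  finite. By connectivity the finite orbit separates coordinates, so \<open>G\<close> is finite.
  For a generic positive \<open>\<lambda>\<close> every word is then equivalent in \<open>W\<close> to a legal play,
  of length bounded by the orbit size, and \<open>W\<close> is finite. Finally the cosine matrix
  of the Tits representation shows that every \<open>W\<close> has an E-GCM.\<close>

section \<open>Plays as affine maps\<close>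

definition terminal :: "nat \<Rightarrow> (nat \<Rightarrow> real) \<Rightarrow> bool" where
  "terminal n v \<longleftrightarrow> (\<forall>i<n. v i \<le> 0)"

definition basis_vec :: "nat \<Rightarrow> nat \<Rightarrow> real" where
  "basis_vec k = (\<lambda>l. if l = k then 1 else 0)"

definition dot_on :: "nat \<Rightarrow> (nat \<Rightarrow> real) \<Rightarrow> (nat \<Rightarrow> real) \<Rightarrow> real" where
  "dot_on n x y = (\<Sum>l<n. x l * y l)"

lemma sum_basis_vec: "(\<Sum>k<n. x k * basis_vec k l) = (if l < n then x l else 0)"
  by (simp add: basis_vec_def if_distrib[of "times _"] cong: if_cong)

lemma dot_on_basis_vec: "k < n \<Longrightarrow> dot_on n x (basis_vec k) = x k"
  by (simp add: dot_on_def basis_vec_def if_distrib[of "times _"] cong: if_cong)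

lemma dot_on_lincomb:
  "dot_on n (\<lambda>l. a * x l + b * y l) z = a * dot_on n x z + b * dot_on n y z"
  by (simp add: dot_on_def sum.distrib sum_distrib_left algebra_simps)

lemma dot_on_fire: "dot_on n (fire M i \<mu>) \<xi> = dot_on n \<mu> \<xi> - \<mu> i * dot_on n (M i) \<xi>"
  by (simp add: dot_on_def fire_def algebra_simps sum_subtractf sum_distrib_left)

lemma sum_dot_on_square:
  "(\<Sum>\<mu>\<in>X. (dot_on n \<mu> z)\<^sup>2) = (\<Sum>k<n. \<Sum>l<n. (\<Sum>\<mu>\<in>X. \<mu> k * \<mu> l) * z k * z l)"
proof -
  have "(\<Sum>\<mu>\<in>X. (dot_on n \<mu> z)\<^sup>2) = (\<Sum>\<mu>\<in>X. \<Sum>k<n. \<Sum>l<n. \<mu> k * \<mu> l * z k * z l)"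
    unfolding dot_on_def power2_eq_square by (simp add: sum_product algebra_simps)
  also have "\<dots> = (\<Sum>k<n. \<Sum>l<n. (\<Sum>\<mu>\<in>X. \<mu> k * \<mu> l) * z k * z l)"
    by (simp add: sum.swap[of _ X] sum_distrib_right)
  finally show ?thesis .
qed

lemma dot_on_commute: "dot_on n x y = dot_on n y x"
  by (simp add: dot_on_def mult.commute)

lemma play_append: "play M v (u @ w) = play M (play M v u) w"
  by (induction u arbitrary: v) auto

lemma legal_play_append:
  "legal_play n M v (u @ w) \<longleftrightarrow> legal_play n M v u \<and> legal_play n M (play M v u) w"
  by (induction u arbitrary: v) auto

lemma legal_play_nodes: "legal_play n M v w \<Longrightarrow> set w \<subseteq> {..<n}"
  by (induction w arbitrary: v) auto

lemma fire_uminus: "fire M i (- v) = - fire M i v"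
  by (simp add: fire_def fun_eq_iff)

lemma play_uminus: "play M (- v) w = - play M v w"
  by (induction w arbitrary: v) (simp_all add: fire_uminus)

lemma fire_lincomb:
  "fire M i (\<lambda>l. a * x l + b * y l) = (\<lambda>l. a * fire M i x l + b * fire M i y l)"
  by (simp add: fire_def fun_eq_iff algebra_simps)

lemma play_lincomb:
  "play M (\<lambda>l. a * x l + b * y l) w = (\<lambda>l. a * play M x w l + b * play M y w l)"
  by (induction w arbitrary: x y) (simp_all add: fire_lincomb)

lemma play_sum:
  "play M (\<lambda>l. \<Sum>k\<in>K. c k * x k l) w = (\<lambda>l. \<Sum>k\<in>K. c k * play M (x k) w l)"
proof (induction K rule: infinite_finite_induct)
  case (infinite K)
  then show ?case using play_lincomb[of M 0 _ 0 _ w] by simp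
next
  case empty
  then show ?case using play_lincomb[of M 0 _ 0 _ w] by simp
next
  case (insert k K)
  then show ?case
    using play_lincomb[of M "c k" "x k" 1 "\<lambda>l. \<Sum>k\<in>K. c k * x k l" w] by simp
qed

lemma play_fixed: "(\<forall>i<n. z i = 0) \<Longrightarrow> set w \<subseteq> {..<n} \<Longrightarrow> play M z w = z"
proof (induction w)
  case (Cons i w)
  then have "fire M i z = z" by (simp add: fire_def)
  with Cons show ?case by simp
qed simp

text \<open>A play is affine in the start: the nodes enter through the plays of the unit
  vectors, the other coordinates are only translated.\<close>

lemma play_coords:
  assumes "set w \<subseteq> {..<n}"
  shows "play M x w l = x l + (\<Sum>k<n. x k * (play M (basis_vec k) w l - basis_vec k l))"
proof -
  define y where "y l = (\<Sum>k<n. x k * basis_vec k l)" for l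
  define z where "z l = x l - y l" for l
  have "x = (\<lambda>l. 1 * y l + 1 * z l)" by (simp add: z_def)
  then have "play M x w = (\<lambda>l. play M y w l + play M z w l)"
    using play_lincomb[of M 1 y 1 z w] by simp
  moreover have "play M y w = (\<lambda>l. \<Sum>k<n. x k * play M (basis_vec k) w l)"
    unfolding y_def by (rule play_sum)
  moreover have "play M z w = z"
    using assms by (intro play_fixed) (auto simp: z_def y_def sum_basis_vec)
  ultimately show ?thesis
    by (simp add: z_def y_def right_diff_distrib sum_subtractf)
qed

lemma play_diff_eq_dot_on:
  assumes "set w\<^sub>1 \<subseteq> {..<n}" "set w\<^sub>2 \<subseteq> {..<n}"
  shows "play M x w\<^sub>1 l - play M x w\<^sub>2 l
    = dot_on n x (\<lambda>k. play M (basis_vec k) w\<^sub>1 l - play M (basis_vec k) w\<^sub>2 l)"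
  using play_coords[OF assms(1), of M x l] play_coords[OF assms(2), of M x l]
  by (simp add: dot_on_def right_diff_distrib sum_subtractf)

locale egcm_game =
  fixes n :: nat and M :: "nat \<Rightarrow> nat \<Rightarrow> real"
  assumes egcm: "egcm n M"
begin

lemma diag [simp]: "i < n \<Longrightarrow> M i i = 2"
  using egcm by (simp add: egcm_def)

lemma offdiag_nonpos: "i < n \<Longrightarrow> j < n \<Longrightarrow> i \<noteq> j \<Longrightarrow> M i j \<le> 0"
  using egcm by (simp add: egcm_def)

lemma fire_self [simp]: "i < n \<Longrightarrow> fire M i v i = - v i"
  by (simp add: fire_def)

lemma fire_fire [simp]: "i < n \<Longrightarrow> fire M i (fire M i v) = v"
  by (simp add: fire_def fun_eq_iff algebra_simps)

lemma play_rev_cancel: "set w \<subseteq> {..<n} \<Longrightarrow> play M (play M v w) (rev w) = v"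
  by (induction w arbitrary: v) (simp_all add: play_append)

lemma legal_play_rev:
  "legal_play n M v w \<Longrightarrow> legal_play n M (- play M v w) (rev w)"
proof (induction w arbitrary: v)
  case (Cons i w)
  then have i: "i < n" "v i > 0" and w: "legal_play n M (fire M i v) w" by auto
  have "play M (- play M (fire M i v) w) (rev w) = - fire M i v"
    using legal_play_nodes[OF w] by (simp add: play_uminus play_rev_cancel)
  then have "legal_play n M (play M (- play M (fire M i v) w) (rev w)) [i]"
    using i by simp
  with Cons.IH[OF w] show ?case
    unfolding play.simps(2) rev.simps(2) legal_play_append by blast
qed simp

end

section \<open>Finite game groups\<close>

context egcm_game
begin

definition game_group :: "((nat \<Rightarrow> real) \<Rightarrow> nat \<Rightarrow> real) set" where
  "game_group = (\<lambda>w v. play M v w) ` lists {..<n}"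

definition orbit :: "(nat \<Rightarrow> real) \<Rightarrow> (nat \<Rightarrow> real) set" where
  "orbit v = (\<lambda>w. play M v w) ` lists {..<n}"

lemma play_in_orbit: "set w \<subseteq> {..<n} \<Longrightarrow> play M v w \<in> orbit v"
  by (auto simp: orbit_def)

lemma self_in_orbit: "v \<in> orbit v"
  using play_in_orbit[of "[]" v] by simp

lemma play_in_orbit_closed: "\<mu> \<in> orbit v \<Longrightarrow> set w \<subseteq> {..<n} \<Longrightarrow> play M \<mu> w \<in> orbit v"
  by (auto simp: orbit_def play_append[symmetric] intro!: image_eqI[where x = "_ @ w"])

lemma fire_in_orbit: "\<mu> \<in> orbit v \<Longrightarrow> i < n \<Longrightarrow> fire M i \<mu> \<in> orbit v"
  using play_in_orbit_closed[of \<mu> v "[i]"] by simp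

lemma orbit_fire: "i < n \<Longrightarrow> orbit (fire M i v) = orbit v"
proof
  assume i: "i < n"
  show "orbit (fire M i v) \<subseteq> orbit v"
    using i by (auto simp: orbit_def intro!: image_eqI[where x = "i # _"])
  show "orbit v \<subseteq> orbit (fire M i v)"
    using i by (auto simp: orbit_def intro!: image_eqI[where x = "i # _"])
qed

lemma orbit_eq_image_game_group: "orbit v = (\<lambda>g. g v) ` game_group"
  by (auto simp: orbit_def game_group_def image_image)

lemma finite_orbit: "finite game_group \<Longrightarrow> finite (orbit v)"
  by (simp add: orbit_eq_image_game_group)

lemma game_group_lincomb:
  "g \<in> game_group \<Longrightarrow> g (\<lambda>l. a * x l + b * y l) = (\<lambda>l. a * g x l + b * g y l)"
  by (auto simp: game_group_def play_lincomb)

lemma game_group_fire: "g \<in> game_group \<Longrightarrow> i < n \<Longrightarrow> (\<lambda>v. g (fire M i v)) \<in> game_group"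
  by (auto simp: game_group_def intro!: image_eqI[where x = "i # _"])

definition inv_form :: "(nat \<Rightarrow> real) \<Rightarrow> (nat \<Rightarrow> real) \<Rightarrow> real" where
  "inv_form x y = (\<Sum>g\<in>game_group. dot_on n (g x) (g y))"

lemma inv_form_commute: "inv_form x y = inv_form y x"
  by (simp add: inv_form_def dot_on_commute)

lemma inv_form_lincomb:
  "inv_form (\<lambda>l. a * x l + b * y l) z = a * inv_form x z + b * inv_form y z"
  by (simp add: inv_form_def game_group_lincomb dot_on_lincomb sum.distrib sum_distrib_left
      cong: sum.cong)

lemma inv_form_fire: "i < n \<Longrightarrow> inv_form (fire M i x) (fire M i y) = inv_form x y"
  unfolding inv_form_def
  by (rule sum.reindex_bij_witness[of _ "\<lambda>g v. g (fire M i v)" "\<lambda>g v. g (fire M i v)"])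
    (auto simp: game_group_fire)

lemma inv_form_root: "i < n \<Longrightarrow> 2 * inv_form x (M i) = x i * inv_form (M i) (M i)"
proof -
  assume i: "i < n"
  have fire_x: "fire M i x = (\<lambda>l. 1 * x l + (- x i) * M i l)"
    by (simp add: fire_def fun_eq_iff)
  have fire_root: "fire M i (M i) = (\<lambda>l. (- 1) * M i l + 0 * M i l)"
    using i by (simp add: fire_def fun_eq_iff)
  note lincomb = inv_form_lincomb[where x = "M i" and y = "M i"]
  have "inv_form x (M i) = inv_form (fire M i x) (fire M i (M i))"
    using inv_form_fire[OF i] by simp
  also have "\<dots> = - inv_form (fire M i x) (M i)"
    unfolding fire_root inv_form_commute[of "fire M i x"] lincomb by simp
  also have "\<dots> = x i * inv_form (M i) (M i) - inv_form x (M i)"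
    unfolding fire_x inv_form_lincomb by simp
  finally show ?thesis by simp
qed

lemma inv_form_root_pos:
  assumes "finite game_group" "i < n"
  shows "inv_form (M i) (M i) > 0"
proof -
  have "(\<lambda>v. v) \<in> game_group"
    by (auto simp: game_group_def intro: image_eqI[where x = "[]"])
  moreover have "dot_on n (M i) (M i) > 0"
    using assms(2) by (auto simp: dot_on_def intro!: sum_pos2[where i = i])
  ultimately show ?thesis
    using assms(1) unfolding inv_form_def
    by (intro sum_pos2[where i = "\<lambda>v. v"]) (auto simp: dot_on_def intro!: sum_nonneg)
qed

definition potential :: "(nat \<Rightarrow> real) \<Rightarrow> real" where
  "potential x = inv_form x (\<lambda>_. 1)"

lemma potential_fire_less:
  assumes "finite game_group" "i < n" "x i > 0"
  shows "potential (fire M i x) < potential x"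
proof -
  have fire_x: "fire M i x = (\<lambda>l. 1 * x l + (- x i) * M i l)"
    by (simp add: fire_def fun_eq_iff)
  have "potential (fire M i x) = potential x - x i * inv_form (M i) (\<lambda>_. 1)"
    unfolding potential_def fire_x inv_form_lincomb by simp
  moreover have "2 * inv_form (M i) (\<lambda>_. 1) = inv_form (M i) (M i)"
    using inv_form_root[OF assms(2), of "\<lambda>_. 1"] by (simp add: inv_form_commute)
  ultimately show ?thesis
    using inv_form_root_pos[OF assms(1,2)] assms(3) by simp
qed

text \<open>The potential strictly decreases along a legal play and takes values in the
  finite orbit, so the play cannot be longer than the orbit.\<close>

lemma legal_play_length_less_card_orbit:
  assumes fin: "finite game_group" and "legal_play n M v p"
  shows "length p < card (orbit v)"
proof -
  have "length p < card {x \<in> orbit v. potential x \<le> potential v}"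
    using assms(2)
  proof (induction p arbitrary: v)
    case Nil
    show ?case using finite_orbit[OF fin] self_in_orbit[of v] by (auto simp: card_gt_0_iff)
  next
    case (Cons i p)
    then have i: "i < n" "v i > 0" and p: "legal_play n M (fire M i v) p" by auto
    let ?S = "\<lambda>u. {x \<in> orbit v. potential x \<le> potential u}"
    have "potential (fire M i v) < potential v" by (rule potential_fire_less[OF fin i(1)]) (rule i(2))
    then have "v \<in> ?S v - ?S (fire M i v)" "?S (fire M i v) \<subseteq> ?S v"
      using self_in_orbit[of v] by auto
    then have "?S (fire M i v) \<subset> ?S v" by blast
    then have "card (?S (fire M i v)) < card (?S v)"
      by (rule psubset_card_mono[rotated]) (simp add: finite_orbit[OF fin])
    moreover have "length p < card (?S (fire M i v))"
      using Cons.IH[OF p] by (simp add: orbit_fire[OF i(1)])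
    ultimately show ?case by simp
  qed
  also have "\<dots> \<le> card (orbit v)"
    by (rule card_mono[OF finite_orbit[OF fin]]) auto
  finally show ?thesis .
qed

lemma terminal_play_exists:
  assumes "finite game_group"
  obtains g where "legal_play n M v g" "terminal n (play M v g)"
proof -
  obtain g where g: "legal_play n M v g"
    and longest: "\<And>p. legal_play n M v p \<Longrightarrow> length p \<le> length g"
    using ex_has_greatest_nat[of "legal_play n M v" "[]" length "card (orbit v)"]
      legal_play_length_less_card_orbit[OF assms] by auto
  have "terminal n (play M v g)"
    unfolding terminal_def
  proof (intro allI impI)
    fix i assume "i < n"
    show "play M v g i \<le> 0"
    proof (rule ccontr)
      assume "\<not> play M v g i \<le> 0"
      with \<open>i < n\<close> g have "legal_play n M v (g @ [i])" by (simp add: legal_play_append)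
      then show False using longest by fastforce
    qed
  qed
  with g show thesis by (rule that)
qed

lemma game_group_row_nonzero:
  assumes "g \<in> game_group" "i < n"
  shows "\<exists>k<n. g (basis_vec k) i \<noteq> 0"
proof (rule ccontr)
  assume "\<not> ?thesis"
  then have zero: "g (basis_vec k) i = 0" if "k < n" for k using that by auto
  obtain w where w: "set w \<subseteq> {..<n}" and g: "g = (\<lambda>x. play M x w)"
    using assms(1) by (auto simp: game_group_def)
  define x where "x = play M (basis_vec i) (rev w)"
  have "g x = basis_vec i" using play_rev_cancel[of "rev w" "basis_vec i"] w by (simp add: g x_def)
  moreover have "g x i = x i + (\<Sum>k<n. x k * (g (basis_vec k) i - basis_vec k i))"
    unfolding g by (rule play_coords[OF w])
  then have "g x i = 0"
    using zero assms(2) by (simp add: sum_negf sum_basis_vec)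
  ultimately show False by (simp add: basis_vec_def)
qed

lemma generic_vector_exists:
  assumes fin: "finite game_group"
  obtains v where "\<forall>i<n. v i > 0" "\<And>w i. set w \<subseteq> {..<n} \<Longrightarrow> i < n \<Longrightarrow> play M v w i \<noteq> 0"
proof -
  define vt where "vt t = (\<lambda>l. \<Sum>k<n. t ^ k * basis_vec k l)" for t :: real
  define P where "P g i = (\<Sum>k<n. monom (g (basis_vec k) i) k)"
    for g :: "(nat \<Rightarrow> real) \<Rightarrow> nat \<Rightarrow> real" and i
  have poly_P: "g (vt t) i = poly (P g i) t" if "g \<in> game_group" for g i t
  proof -
    from that obtain w where g: "g = (\<lambda>x. play M x w)" by (auto simp: game_group_def)
    show ?thesis unfolding g vt_def play_sum by (simp add: P_def poly_sum poly_monom mult.commute)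
  qed
  have "P g i \<noteq> 0" if g: "g \<in> game_group" and i: "i < n" for g i
  proof -
    obtain k where "k < n" "g (basis_vec k) i \<noteq> 0" using game_group_row_nonzero[OF g i] by blast
    then have "coeff (P g i) k \<noteq> 0" by (simp add: P_def coeff_sum)
    then show ?thesis by auto
  qed
  then have "finite (\<Union>g\<in>game_group. \<Union>i<n. {t. poly (P g i) t = 0})"
    using fin by (simp add: poly_roots_finite)
  then have "infinite ({0<..} - (\<Union>g\<in>game_group. \<Union>i<n. {t. poly (P g i) t = 0}))"
    using infinite_Ioi by (rule Diff_infinite_finite)
  then obtain t where "t \<in> {0<..} - (\<Union>g\<in>game_group. \<Union>i<n. {t. poly (P g i) t = 0})"
    using infinite_imp_nonempty by blast
  then have t: "t > 0" "\<And>g i. g \<in> game_group \<Longrightarrow> i < n \<Longrightarrow> poly (P g i) t \<noteq> 0"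
    by auto
  show ?thesis
  proof
    show "\<forall>i<n. vt t i > 0" using t(1) by (simp add: vt_def sum_basis_vec[where x = "\<lambda>k. t ^ k"])
  next
    fix w i assume "set w \<subseteq> {..<n}" "i < n"
    then have "(\<lambda>x. play M x w) \<in> game_group" by (auto simp: game_group_def)
    from poly_P[OF this] t(2)[OF this \<open>i < n\<close>] show "play M (vt t) w i \<noteq> 0" by simp
  qed
qed

end

section \<open>Finite orbits separate coordinates\<close>

context egcm_game
begin

lemma sum_orbit_fire:
  "i < n \<Longrightarrow> (\<Sum>\<mu>\<in>orbit v. f (fire M i \<mu>)) = (\<Sum>\<mu>\<in>orbit v. f \<mu>)"
  by (rule sum.reindex_bij_witness[of _ "fire M i" "fire M i"]) (auto simp: fire_in_orbit)

text \<open>Firing \<open>i\<close> permutes the orbit, negates \<open>\<mu> i\<close> and lowers \<open>\<mu> \<cdot> \<xi>\<close> by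
  \<open>\<mu> i (M\<^sub>i \<cdot> \<xi>)\<close>.\<close>

lemma orbit_moment:
  assumes "i < n"
  shows "2 * (\<Sum>\<mu>\<in>orbit v. dot_on n \<mu> \<xi> * \<mu> i)
    = dot_on n (M i) \<xi> * (\<Sum>\<mu>\<in>orbit v. (\<mu> i)\<^sup>2)"
proof -
  let ?c = "dot_on n (M i) \<xi>"
  have "(\<Sum>\<mu>\<in>orbit v. dot_on n \<mu> \<xi> * \<mu> i)
      = (\<Sum>\<mu>\<in>orbit v. dot_on n (fire M i \<mu>) \<xi> * fire M i \<mu> i)"
    using sum_orbit_fire[OF assms, where v = v and f = "\<lambda>\<mu>. dot_on n \<mu> \<xi> * \<mu> i"] by simp
  also have "\<dots> = (\<Sum>\<mu>\<in>orbit v. ?c * (\<mu> i)\<^sup>2 - dot_on n \<mu> \<xi> * \<mu> i)"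
    using assms by (simp add: dot_on_fire algebra_simps power2_eq_square)
  also have "\<dots> = ?c * (\<Sum>\<mu>\<in>orbit v. (\<mu> i)\<^sup>2) - (\<Sum>\<mu>\<in>orbit v. dot_on n \<mu> \<xi> * \<mu> i)"
    by (simp add: sum_subtractf sum_distrib_left)
  finally show ?thesis by simp
qed

lemma orbit_moment_basis_vec:
  "i < n \<Longrightarrow> k < n \<Longrightarrow> 2 * (\<Sum>\<mu>\<in>orbit v. \<mu> k * \<mu> i) = M i k * (\<Sum>\<mu>\<in>orbit v. (\<mu> i)\<^sup>2)"
proof -
  assume "i < n" "k < n"
  have "(\<Sum>\<mu>\<in>orbit v. dot_on n \<mu> (basis_vec k) * \<mu> i) = (\<Sum>\<mu>\<in>orbit v. \<mu> k * \<mu> i)"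
    using \<open>k < n\<close> by (simp add: dot_on_basis_vec)
  with orbit_moment[OF \<open>i < n\<close>, where v = v and \<xi> = "basis_vec k"] \<open>k < n\<close>
  show ?thesis by (simp add: dot_on_basis_vec)
qed

lemma orbit_gram_offdiag_nonpos:
  assumes "k < n" "l < n" "k \<noteq> l"
  shows "(\<Sum>\<mu>\<in>orbit v. \<mu> k * \<mu> l) \<le> 0"
proof -
  have "M l k * (\<Sum>\<mu>\<in>orbit v. (\<mu> l)\<^sup>2) \<le> 0"
    using offdiag_nonpos[of l k] assms by (intro mult_nonpos_nonneg sum_nonneg) auto
  then show ?thesis using orbit_moment_basis_vec[OF assms(2,1), of v] by simp
qed

text \<open>Taking absolute values can only decrease the positive semidefinite form
  \<open>z \<mapsto> \<Sum>\<mu>. (\<mu> \<cdot> z)\<^sup>2\<close>, whose off-diagonal coefficients are nonpositive.\<close>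

lemma orbit_annihilator_abs:
  assumes fin: "finite (orbit v)" and ann: "\<forall>\<mu>\<in>orbit v. dot_on n \<mu> \<xi> = 0"
  shows "\<forall>\<mu>\<in>orbit v. dot_on n \<mu> (\<lambda>l. \<bar>\<xi> l\<bar>) = 0"
proof -
  let ?A = "\<lambda>k l. \<Sum>\<mu>\<in>orbit v. \<mu> k * \<mu> l"
  have "(\<Sum>\<mu>\<in>orbit v. (dot_on n \<mu> (\<lambda>l. \<bar>\<xi> l\<bar>))\<^sup>2) \<le> (\<Sum>\<mu>\<in>orbit v. (dot_on n \<mu> \<xi>)\<^sup>2)"
    unfolding sum_dot_on_square
  proof (intro sum_mono)
    fix k l assume kl: "k \<in> {..<n}" "l \<in> {..<n}"
    show "?A k l * \<bar>\<xi> k\<bar> * \<bar>\<xi> l\<bar> \<le> ?A k l * \<xi> k * \<xi> l"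
    proof (cases "k = l")
      case False
      then have "?A k l \<le> 0" using orbit_gram_offdiag_nonpos kl by simp
      moreover have "\<xi> k * \<xi> l \<le> \<bar>\<xi> k\<bar> * \<bar>\<xi> l\<bar>" by (simp add: abs_mult[symmetric])
      ultimately show ?thesis by (simp add: mult.assoc mult_left_mono_neg)
    qed simp
  qed
  also have "\<dots> = 0" using ann by simp
  finally have "(\<Sum>\<mu>\<in>orbit v. (dot_on n \<mu> (\<lambda>l. \<bar>\<xi> l\<bar>))\<^sup>2) = 0"
    by (intro antisym sum_nonneg) auto
  then show ?thesis using fin by (simp add: sum_nonneg_eq_0_iff)
qed

lemma orbit_sq_sum_pos:
  assumes fin: "finite (orbit v)" and conn: "egcm_connected n M"
    and i0: "i0 < n" "v i0 \<noteq> 0" and i: "i < n"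
  shows "(\<Sum>\<mu>\<in>orbit v. (\<mu> i)\<^sup>2) > 0"
proof -
  have pos: "(\<Sum>\<mu>\<in>orbit v. (\<mu> j)\<^sup>2) > 0" if "\<mu> \<in> orbit v" "\<mu> j \<noteq> 0" for \<mu> j
    using fin that by (intro sum_pos2[where i = \<mu>]) auto
  have "(\<Sum>\<mu>\<in>orbit v. (\<mu> j)\<^sup>2) > 0" if "(egcm_adj n M)\<^sup>*\<^sup>* i0 j" for j
    using that
  proof (induction rule: rtranclp_induct)
    case base
    show ?case using pos[OF self_in_orbit i0(2)] .
  next
    case (step j k)
    then have jk: "j < n" "k < n" "M j k \<noteq> 0" by (auto simp: egcm_adj_def)
    have "2 * (\<Sum>\<mu>\<in>orbit v. \<mu> k * \<mu> j) = M j k * (\<Sum>\<mu>\<in>orbit v. (\<mu> j)\<^sup>2)"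
      using jk by (intro orbit_moment_basis_vec)
    moreover have "M j k * (\<Sum>\<mu>\<in>orbit v. (\<mu> j)\<^sup>2) \<noteq> 0" using jk(3) step.IH by simp
    ultimately have "(\<Sum>\<mu>\<in>orbit v. \<mu> k * \<mu> j) \<noteq> 0" by linarith
    then obtain \<mu> where "\<mu> \<in> orbit v" "\<mu> k * \<mu> j \<noteq> 0" by (meson sum.neutral)
    then have "\<mu> \<in> orbit v" "\<mu> k \<noteq> 0" by simp_all
    then show ?case by (rule pos)
  qed
  then show ?thesis using conn i0(1) i by (simp add: egcm_connected_def)
qed

lemma nonneg_row_zero_spreads:
  assumes y: "\<forall>l<n. y l \<ge> 0" and row: "dot_on n (M j) y = 0"
    and j: "j < n" "y j = 0" and k: "k < n" "M j k \<noteq> 0"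
  shows "y k = 0"
proof -
  have nonneg: "- (M j l * y l) \<ge> 0" if "l < n" for l
  proof (cases "l = j")
    case False
    then have "M j l \<le> 0" using offdiag_nonpos[OF j(1) that] by simp
    then show ?thesis using y that by (simp add: mult_nonpos_nonneg)
  qed (simp add: j(2))
  have "(\<Sum>l<n. - (M j l * y l)) = 0"
    using row by (simp add: dot_on_def sum_negf)
  then have "M j k * y k = 0"
    using sum_nonneg_eq_0_iff[of "{..<n}" "\<lambda>l. - (M j l * y l)"] nonneg k(1) by simp
  then show ?thesis using k(2) by simp
qed

text \<open>By \<open>orbit_moment\<close> such a \<open>y\<close> satisfies \<open>M y = 0\<close>, and \<open>v \<cdot> y = 0\<close> gives it a
  zero in the support of \<open>v\<close>, which spreads along the connected graph.\<close>

lemma nonneg_orbit_annihilator_eq_0: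
  assumes fin: "finite (orbit v)" and conn: "egcm_connected n M"
    and dom: "\<forall>l<n. v l \<ge> 0" and i0: "i0 < n" "v i0 \<noteq> 0"
    and y: "\<forall>l<n. y l \<ge> 0" and ann: "\<forall>\<mu>\<in>orbit v. dot_on n \<mu> y = 0" and i: "i < n"
  shows "y i = 0"
proof -
  have row: "dot_on n (M j) y = 0" if "j < n" for j
  proof -
    have "(\<Sum>\<mu>\<in>orbit v. dot_on n \<mu> y * \<mu> j) = 0" using ann by (auto intro: sum.neutral)
    then have "dot_on n (M j) y * (\<Sum>\<mu>\<in>orbit v. (\<mu> j)\<^sup>2) = 0"
      using orbit_moment[OF that, where v = v and \<xi> = y] by simp
    then show ?thesis using orbit_sq_sum_pos[OF fin conn i0 that] by simp
  qed
  have spread: "y k = 0" if "y j = 0" "egcm_adj n M j k" for j k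
    using that y row[of j] by (intro nonneg_row_zero_spreads) (auto simp: egcm_adj_def)
  have "v i0 * y i0 = 0"
  proof -
    have "(\<Sum>l<n. v l * y l) = 0" using ann self_in_orbit[of v] by (simp add: dot_on_def)
    then show ?thesis
      using sum_nonneg_eq_0_iff[of "{..<n}" "\<lambda>l. v l * y l"] dom y i0(1) by simp
  qed
  then have "y i0 = 0" using i0(2) by simp
  have "y j = 0" if "(egcm_adj n M)\<^sup>*\<^sup>* i0 j" for j
    using that
  proof (induction rule: rtranclp_induct)
    case (step j k)
    then show ?case using spread by blast
  qed (rule \<open>y i0 = 0\<close>)
  then show ?thesis using conn i0(1) i by (simp add: egcm_connected_def)
qed

lemma orbit_separates:
  assumes "finite (orbit v)" "egcm_connected n M" "\<forall>l<n. v l \<ge> 0" "i0 < n" "v i0 \<noteq> 0"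
    and "\<forall>\<mu>\<in>orbit v. dot_on n \<mu> \<xi> = 0" "i < n"
  shows "\<xi> i = 0"
  using nonneg_orbit_annihilator_eq_0[OF assms(1-5) _ orbit_annihilator_abs[OF assms(1,6)] assms(7)]
  by simp

text \<open>Plays are affine, so two plays that agree on a separating orbit agree everywhere.\<close>

lemma finite_game_group_if_orbit_separates:
  assumes fin: "finite (orbit v)"
    and sep: "\<And>\<xi>. \<forall>\<mu>\<in>orbit v. dot_on n \<mu> \<xi> = 0 \<Longrightarrow> \<forall>k<n. \<xi> k = 0"
  shows "finite game_group"
proof -
  have "inj_on (\<lambda>g. restrict g (orbit v)) game_group"
  proof (rule inj_onI)
    fix g\<^sub>1 g\<^sub>2
    assume "g\<^sub>1 \<in> game_group" "g\<^sub>2 \<in> game_group"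
      and eq: "restrict g\<^sub>1 (orbit v) = restrict g\<^sub>2 (orbit v)"
    then obtain w\<^sub>1 w\<^sub>2 where w: "set w\<^sub>1 \<subseteq> {..<n}" "set w\<^sub>2 \<subseteq> {..<n}"
      and g: "g\<^sub>1 = (\<lambda>x. play M x w\<^sub>1)" "g\<^sub>2 = (\<lambda>x. play M x w\<^sub>2)"
      by (auto simp: game_group_def)
    have "play M x w\<^sub>1 l = play M x w\<^sub>2 l" for x l
    proof -
      let ?\<xi> = "\<lambda>k. play M (basis_vec k) w\<^sub>1 l - play M (basis_vec k) w\<^sub>2 l"
      have "play M \<mu> w\<^sub>1 l = play M \<mu> w\<^sub>2 l" if "\<mu> \<in> orbit v" for \<mu>
        using fun_cong[OF eq, of \<mu>] that by (simp add: g)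
      then have "\<forall>\<mu>\<in>orbit v. dot_on n \<mu> ?\<xi> = 0"
        by (simp add: play_diff_eq_dot_on[OF w, symmetric])
      then have "\<forall>k<n. ?\<xi> k = 0" by (rule sep)
      then have "dot_on n x ?\<xi> = 0" by (simp add: dot_on_def)
      then show ?thesis using play_diff_eq_dot_on[OF w, of M x l] by simp
    qed
    then show "g\<^sub>1 = g\<^sub>2" by (simp add: g fun_eq_iff)
  qed
  moreover have "(\<lambda>g. restrict g (orbit v)) ` game_group \<subseteq> orbit v \<rightarrow>\<^sub>E orbit v"
  proof
    fix h assume "h \<in> (\<lambda>g. restrict g (orbit v)) ` game_group"
    then obtain w where "set w \<subseteq> {..<n}" "h = restrict (\<lambda>x. play M x w) (orbit v)"
      by (auto simp: game_group_def)
    then show "h \<in> orbit v \<rightarrow>\<^sub>E orbit v" by (simp add: play_in_orbit_closed)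
  qed
  moreover have "finite (orbit v \<rightarrow>\<^sub>E orbit v)" using fin by (simp add: finite_PiE)
  ultimately show ?thesis by (rule inj_on_finite)
qed

end

section \<open>Words in the Coxeter group\<close>

fun alt_word :: "nat \<Rightarrow> nat \<Rightarrow> nat \<Rightarrow> nat list" where
  "alt_word i j 0 = []"
| "alt_word i j (Suc k) = i # alt_word j i k"

lemma set_alt_word: "set (alt_word i j k) \<subseteq> {i, j}"
  by (induction k arbitrary: i j) auto

lemma length_alt_word [simp]: "length (alt_word i j k) = k"
  by (induction k arbitrary: i j) auto

lemma Cons_concat_replicate_snoc:
  "i # concat (replicate k [j, i]) @ [j] = concat (replicate (Suc k) [i, j])"
  by (induction k) auto

lemma alt_word_append_rev: "alt_word i j k @ rev (alt_word j i k) = concat (replicate k [i, j])"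
proof (induction k arbitrary: i j)
  case (Suc k)
  have "alt_word i j (Suc k) @ rev (alt_word j i (Suc k))
      = i # (alt_word j i k @ rev (alt_word i j k)) @ [j]" by simp
  also have "\<dots> = i # concat (replicate k [j, i]) @ [j]" by (simp only: Suc.IH)
  finally show ?case by (simp only: Cons_concat_replicate_snoc)
qed simp

locale coxeter =
  fixes n :: nat and m :: "nat \<Rightarrow> nat \<Rightarrow> enat"
  assumes coxeter_matrix: "coxeter_matrix n m"
begin

lemma m_sym: "i < n \<Longrightarrow> j < n \<Longrightarrow> i \<noteq> j \<Longrightarrow> m i j = m j i"
  using coxeter_matrix by (simp add: coxeter_matrix_def)

lemma m_ge_2: "i < n \<Longrightarrow> j < n \<Longrightarrow> i \<noteq> j \<Longrightarrow> m i j \<ge> 2"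
  using coxeter_matrix by (simp add: coxeter_matrix_def)

lemma rev_relator: "r \<in> relators n m \<Longrightarrow> rev r \<in> relators n m"
proof (unfold relators_def, elim UnE CollectE exE conjE)
  fix i j k assume r: "r = concat (replicate k [i, j])" "i < n" "j < n" "i \<noteq> j" "m i j = enat k"
  have "rev r = rev (alt_word i j k @ rev (alt_word j i k))"
    by (simp only: r(1) flip: alt_word_append_rev)
  also have "\<dots> = alt_word j i k @ rev (alt_word i j k)" by simp
  also have "\<dots> = concat (replicate k [j, i])" by (rule alt_word_append_rev)
  finally have "rev r = concat (replicate k [j, i])" .
  then show "rev r \<in> {[i, i] |i. i < n} \<union>
      {concat (replicate k [i, j]) |i j k. i < n \<and> j < n \<and> i \<noteq> j \<and> m i j = enat k}"
    using r m_sym by (intro UnI2 CollectI exI[of _ j] exI[of _ i] exI[of _ k]) auto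
qed auto

lemma cox_rel_refl [simp]: "(w, w) \<in> cox_rel n m"
  by (simp add: cox_rel_def)

lemma cox_rel_sym: "(w, w') \<in> cox_rel n m \<Longrightarrow> (w', w) \<in> cox_rel n m"
  unfolding cox_rel_def by (metis converse_Un converse_converse rtrancl_converseI sup_commute)

lemma cox_rel_trans: "(u, v) \<in> cox_rel n m \<Longrightarrow> (v, w) \<in> cox_rel n m \<Longrightarrow> (u, w) \<in> cox_rel n m"
  unfolding cox_rel_def by (rule rtrancl_trans)

lemma cox_rel_relator:
  "r \<in> relators n m \<Longrightarrow> set u \<subseteq> {..<n} \<Longrightarrow> set v \<subseteq> {..<n} \<Longrightarrow> (u @ r @ v, u @ v) \<in> cox_rel n m"
  unfolding cox_rel_def cox_step_def by blast

lemma cox_rel_cancel: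
  "i < n \<Longrightarrow> set u \<subseteq> {..<n} \<Longrightarrow> set v \<subseteq> {..<n} \<Longrightarrow> (u @ [i, i] @ v, u @ v) \<in> cox_rel n m"
  by (rule cox_rel_relator) (auto simp: relators_def)

lemma cox_rel_context:
  assumes "(w, w') \<in> cox_rel n m" "set x \<subseteq> {..<n}" "set y \<subseteq> {..<n}"
  shows "(x @ w @ y, x @ w' @ y) \<in> cox_rel n m"
proof -
  have step: "(x @ w @ y, x @ w' @ y) \<in> cox_step n m" if "(w, w') \<in> cox_step n m" for w w'
  proof -
    from that obtain u r v where "w = u @ r @ v" "w' = u @ v"
      and "r \<in> relators n m" "set u \<subseteq> {..<n}" "set v \<subseteq> {..<n}"
      unfolding cox_step_def by blast
    then show ?thesis
      using assms(2,3) unfolding cox_step_def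
      by (intro CollectI exI[of _ "x @ u"] exI[of _ r] exI[of _ "v @ y"]) auto
  qed
  show ?thesis
    using assms(1) unfolding cox_rel_def
    by (induction rule: rtrancl_induct) (blast intro: rtrancl_into_rtrancl dest: step)+
qed

lemma cox_rel_Cons: "(w, w') \<in> cox_rel n m \<Longrightarrow> i < n \<Longrightarrow> (i # w, i # w') \<in> cox_rel n m"
  using cox_rel_context[of w w' "[i]" "[]"] by simp

lemma cox_rel_append_right:
  "(w, w') \<in> cox_rel n m \<Longrightarrow> set y \<subseteq> {..<n} \<Longrightarrow> (w @ y, w' @ y) \<in> cox_rel n m"
  using cox_rel_context[of w w' "[]" y] by simp

lemma cox_rel_rev: "(w, w') \<in> cox_rel n m \<Longrightarrow> (rev w, rev w') \<in> cox_rel n m"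
proof -
  have step: "(rev w, rev w') \<in> cox_step n m" if "(w, w') \<in> cox_step n m" for w w'
  proof -
    from that obtain u r v where "w = u @ r @ v" "w' = u @ v"
      and "r \<in> relators n m" "set u \<subseteq> {..<n}" "set v \<subseteq> {..<n}"
      unfolding cox_step_def by blast
    then show ?thesis
      using rev_relator unfolding cox_step_def
      by (intro CollectI exI[of _ "rev v"] exI[of _ "rev r"] exI[of _ "rev u"]) auto
  qed
  show "(w, w') \<in> cox_rel n m \<Longrightarrow> (rev w, rev w') \<in> cox_rel n m"
    unfolding cox_rel_def
    by (induction rule: rtrancl_induct) (blast intro: rtrancl_into_rtrancl dest: step)+
qed

lemma cox_rel_rev_append_self: "set w \<subseteq> {..<n} \<Longrightarrow> (rev w @ w, []) \<in> cox_rel n m"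
proof (induction w)
  case (Cons i w)
  then have "(rev w @ [i, i] @ w, rev w @ w) \<in> cox_rel n m" by (intro cox_rel_cancel) auto
  with Cons show ?case by (auto intro: cox_rel_trans)
qed simp

lemma cox_rel_braid:
  assumes "i < n" "j < n" "i \<noteq> j" "m i j = enat k"
  shows "(alt_word i j k, alt_word j i k) \<in> cox_rel n m"
proof -
  let ?x = "alt_word i j k" and ?y = "alt_word j i k"
  have x: "set ?x \<subseteq> {..<n}" and y: "set ?y \<subseteq> {..<n}"
    using set_alt_word[of i j k] set_alt_word[of j i k] assms by auto
  have r: "?x @ rev ?y \<in> relators n m"
    using assms unfolding alt_word_append_rev relators_def by blast
  have "(?x @ (rev ?y @ ?y), ?x @ []) \<in> cox_rel n m"
    using cox_rel_context[OF cox_rel_rev_append_self[OF y], of ?x "[]"] x by simp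
  moreover have "([] @ (?x @ rev ?y) @ ?y, [] @ ?y) \<in> cox_rel n m"
    using cox_rel_relator[OF r, of "[]" ?y] y by simp
  ultimately show ?thesis by (auto intro: cox_rel_trans cox_rel_sym)
qed

end

section \<open>Rank two\<close>

lemma pi_div_bounds:
  assumes "k \<ge> 2"
  shows "0 < pi / real k" "pi / real k \<le> pi / 2"
proof -
  show "0 < pi / real k" using assms by simp
  show "pi / real k \<le> pi / 2" using assms by (intro divide_left_mono) auto
qed

lemma cos_pi_div_nonneg: "k \<ge> 2 \<Longrightarrow> cos (pi / real k) \<ge> 0"
  using pi_div_bounds[of k] pi_gt_zero by (intro cos_ge_zero) linarith+

lemma cos_pi_div_pos: "k \<ge> 3 \<Longrightarrow> cos (pi / real k) > 0"
proof -
  assume "k \<ge> 3"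
  then have "pi / real k < pi / 2" by (intro divide_strict_left_mono) auto
  with pi_div_bounds[of k] \<open>k \<ge> 3\<close> pi_gt_zero show ?thesis by (intro cos_gt_zero) linarith+
qed

lemma cos_pi_div_sq_less_1: "k \<ge> 2 \<Longrightarrow> (cos (pi / real k))\<^sup>2 < 1"
proof -
  assume k: "k \<ge> 2"
  have "cos (pi / real k) < cos 0"
    using pi_div_bounds[OF k] pi_gt_zero by (intro cos_monotone_0_pi) linarith+
  with cos_pi_div_nonneg[OF k] show ?thesis by (simp add: abs_square_less_1)
qed

lemma chebyshev_sin:
  fixes y :: "nat \<Rightarrow> real"
  assumes rec: "\<And>s. y (Suc (Suc s)) = 2 * cos \<theta> * y (Suc s) - y s"
  shows "y s * sin \<theta> = y 1 * sin (real s * \<theta>) - y 0 * sin ((real s - 1) * \<theta>)"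
proof -
  have trig: "sin (x + \<theta>) = 2 * cos \<theta> * sin x - sin (x - \<theta>)" for x
    by (simp add: sin_add sin_diff algebra_simps)
  have "y s * sin \<theta> = y 1 * sin (real s * \<theta>) - y 0 * sin ((real s - 1) * \<theta>)
      \<and> y (Suc s) * sin \<theta> = y 1 * sin ((real s + 1) * \<theta>) - y 0 * sin (real s * \<theta>)"
  proof (induction s)
    case (Suc s)
    have arg: "(real s + 1) * \<theta> + \<theta> = (real s + 2) * \<theta>" "(real s + 1) * \<theta> - \<theta> = real s * \<theta>"
      "real s * \<theta> + \<theta> = (real s + 1) * \<theta>" "real s * \<theta> - \<theta> = (real s - 1) * \<theta>"
      by (simp_all add: algebra_simps)
    have t: "sin ((real s + 2) * \<theta>) = 2 * cos \<theta> * sin ((real s + 1) * \<theta>) - sin (real s * \<theta>)"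
      "sin ((real s + 1) * \<theta>) = 2 * cos \<theta> * sin (real s * \<theta>) - sin ((real s - 1) * \<theta>)"
      using trig[of "(real s + 1) * \<theta>"] trig[of "real s * \<theta>"] by (simp_all only: arg)
    have "y (Suc (Suc s)) * sin \<theta> = y 1 * sin ((real s + 2) * \<theta>) - y 0 * sin ((real s + 1) * \<theta>)"
      unfolding rec t(1) using Suc.IH t(2) by algebra
    moreover have "real (Suc s) = real s + 1" "real s + 1 - 1 = real s" "real s + 1 + 1 = real s + 2"
      by simp_all
    ultimately show ?case using Suc.IH by (simp only:)
  qed simp
  then show ?thesis ..
qed

text \<open>Firing \<open>i\<close> and then \<open>j\<close> acts on the pair of populations \<open>(\<lambda>\<^sub>i, \<lambda>\<^sub>j)\<close> by
  \<open>rank2_step (M i j) (M j i)\<close>.\<close>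

definition rank2_step :: "real \<Rightarrow> real \<Rightarrow> real \<times> real \<Rightarrow> real \<times> real" where
  "rank2_step a b = (\<lambda>(p, q). ((a * b - 1) * p - b * q, a * p - q))"

lemma rank2_step_funpow_period:
  assumes k: "k \<ge> 3" and ab: "a * b = 4 * (cos (pi / k))\<^sup>2"
  shows "(rank2_step a b ^^ k) w = w"
proof -
  define \<theta> where "\<theta> = 2 * pi / k"
  have trace: "a * b - 2 = 2 * cos \<theta>"
    using ab cos_double_cos[of "pi / k"] by (simp add: \<theta>_def)
  have "0 < \<theta>" "\<theta> < pi" using k by (auto simp: \<theta>_def field_simps)
  then have "sin \<theta> \<noteq> 0" using sin_gt_zero by fastforce
  have period: "f ((rank2_step a b ^^ k) w) = f w"
    if rec: "\<And>s. f ((rank2_step a b ^^ Suc (Suc s)) w)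
      = 2 * cos \<theta> * f ((rank2_step a b ^^ Suc s) w) - f ((rank2_step a b ^^ s) w)"
    for f :: "real \<times> real \<Rightarrow> real"
  proof -
    have "real k * \<theta> = 2 * pi" "(real k - 1) * \<theta> = 2 * pi - \<theta>"
      using k by (simp_all add: \<theta>_def field_simps)
    then have "f ((rank2_step a b ^^ k) w) * sin \<theta> = f w * sin \<theta>"
      using chebyshev_sin[of "\<lambda>s. f ((rank2_step a b ^^ s) w)" \<theta> k] rec by (simp add: sin_diff)
    with \<open>sin \<theta> \<noteq> 0\<close> show ?thesis by simp
  qed
  have step2: "rank2_step a b (rank2_step a b x)
      = (fst (rank2_step a b x) * (a * b - 2) - fst x, snd (rank2_step a b x) * (a * b - 2) - snd x)"
    for x by (cases x) (simp add: rank2_step_def algebra_simps)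
  have "fst ((rank2_step a b ^^ k) w) = fst w" "snd ((rank2_step a b ^^ k) w) = snd w"
    by (rule period; simp add: step2 trace algebra_simps)+
  then show ?thesis by (simp add: prod_eq_iff)
qed

text \<open>Summing \<open>x\<^sub>s\<^sub>+\<^sub>1 = T x\<^sub>s\<close> over a period gives \<open>(T - 1) (\<Sum>\<^sub>s x\<^sub>s) = 0\<close>, and
  \<open>T - 1\<close> is invertible unless \<open>a b = 4\<close>.\<close>

lemma rank2_step_period_sum_zero:
  assumes per: "(rank2_step a b ^^ k) w = w" and ab: "a * b \<noteq> 4"
  shows "(\<Sum>s<k. fst ((rank2_step a b ^^ s) w)) = 0 \<and> (\<Sum>s<k. snd ((rank2_step a b ^^ s) w)) = 0"
proof -
  define P where "P = (\<Sum>s<k. fst ((rank2_step a b ^^ s) w))"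
  define Q where "Q = (\<Sum>s<k. snd ((rank2_step a b ^^ s) w))"
  have shift: "(\<Sum>s<k. f ((rank2_step a b ^^ Suc s) w)) = (\<Sum>s<k. f ((rank2_step a b ^^ s) w))"
    for f :: "real \<times> real \<Rightarrow> real"
    using sum.lessThan_Suc_shift[of "\<lambda>s. f ((rank2_step a b ^^ s) w)" k] per by simp
  have "P = (a * b - 1) * P - b * Q" "Q = a * P - Q"
    using shift[of fst] shift[of snd]
    by (simp_all add: P_def Q_def rank2_step_def case_prod_beta sum_subtractf sum_distrib_left)
  then have "(a * b - 4) * P = 0" "2 * Q = a * P" by algebra+
  with ab have "P = 0" "Q = 0" by simp_all
  then show ?thesis by (simp add: P_def Q_def)
qed

text \<open>\<open>alt_legal (M i j) (M j i) k (\<lambda> i) (\<lambda> j)\<close> says that the alternating play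
  \<open>i j i \<dots>\<close> of length \<open>k\<close> from \<open>\<lambda>\<close> is legal (see \<open>legal_play_alt_word\<close>).\<close>

fun alt_legal :: "real \<Rightarrow> real \<Rightarrow> nat \<Rightarrow> real \<Rightarrow> real \<Rightarrow> bool" where
  "alt_legal a b 0 u v = True"
| "alt_legal a b (Suc k) u v \<longleftrightarrow> u > 0 \<and> alt_legal b a k (v - a * u) (- u)"

lemma alt_legal_infinite:
  "a < 0 \<Longrightarrow> b < 0 \<Longrightarrow> a * b \<ge> 4 \<Longrightarrow> u > 0 \<Longrightarrow> u * sqrt (- a) + v * sqrt (- b) \<ge> 0
    \<Longrightarrow> alt_legal a b k u v"
proof (induction k arbitrary: a b u v)
  case (Suc k)
  define sa sb where "sa = sqrt (- a)" and "sb = sqrt (- b)"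
  have sa: "sa > 0" "sa * sa = - a" and sb: "sb > 0" "sb * sb = - b"
    using Suc.prems by (auto simp: sa_def sb_def)
  have "(sa * sb) * (sa * sb) = (sa * sa) * (sb * sb)" by (simp only: mult_ac)
  then have "2 * 2 \<le> (sa * sb) * (sa * sb)" using sa(2) sb(2) Suc.prems(3) by simp
  then have "2\<^sup>2 \<le> (sa * sb)\<^sup>2" by (simp only: power2_eq_square)
  moreover have "0 \<le> sa * sb" using sa(1) sb(1) by simp
  ultimately have sab: "2 \<le> sa * sb" by (rule power2_le_imp_le)
  have h1: "v * sb \<ge> - (u * sa)" using Suc.prems(5) by (simp add: sa_def sb_def)
  have h2: "u * sa * (sa * sb) \<ge> u * sa * 2"
    using sab by (rule mult_left_mono) (use Suc.prems(4) sa(1) in simp)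
  have a: "a = - (sa * sa)" using sa(2) by simp
  have h3: "(v - a * u) * sb = v * sb + u * sa * (sa * sb)" unfolding a by (simp add: algebra_simps)
  have step: "(v - a * u) * sb \<ge> u * sa" using h1 h2 h3 by linarith
  moreover have "u * sa > 0" using Suc.prems(4) sa(1) by simp
  ultimately have "(v - a * u) * sb > 0" by linarith
  with sb(1) have pos: "v - a * u > 0" by (simp add: zero_less_mult_iff)
  have "(v - a * u) * sqrt (- b) + (- u) * sqrt (- a) \<ge> 0"
    using step by (simp add: sa_def sb_def)
  then have "alt_legal b a k (v - a * u) (- u)"
    by (rule Suc.IH[rotated 4]) (use Suc.prems pos in \<open>simp_all add: mult.commute\<close>)
  with Suc.prems(4) show ?case by simp
qed simp

lemma alt_legal_of_recurrence:
  fixes g :: "real \<Rightarrow> real"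
  assumes rec: "\<And>t. g (t + 1) = 2 * cos \<phi> * g t - g (t - 1)"
  shows "a < 0 \<Longrightarrow> b < 0 \<Longrightarrow> sqrt (- a) * sqrt (- b) = 2 * cos \<phi>
    \<Longrightarrow> (\<forall>s<r. g (t + real s) > 0)
    \<Longrightarrow> alt_legal a b r (sqrt (- b) * g t) (- sqrt (- a) * g (t - 1))"
proof (induction r arbitrary: a b t)
  case (Suc r)
  define sa sb where "sa = sqrt (- a)" and "sb = sqrt (- b)"
  have a: "a = - (sa * sa)" using Suc.prems(1) by (simp add: sa_def)
  have sq: "sa * sb = 2 * cos \<phi>" using Suc.prems(3) by (simp add: sa_def sb_def)
  have "- sa * g (t - 1) - a * (sb * g t) = sa * (2 * cos \<phi> * g t - g (t - 1))"
    unfolding a sq[symmetric] by (simp add: algebra_simps)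
  also have "\<dots> = sa * g (t + 1)" by (simp add: rec)
  finally have step_value: "- sqrt (- a) * g (t - 1) - a * (sqrt (- b) * g t) = sqrt (- a) * g (t + 1)"
    by (simp only: sa_def sb_def)
  have "\<forall>s<r. g (t + 1 + real s) > 0"
  proof (intro allI impI)
    fix s assume "s < r"
    then have "g (t + real (Suc s)) > 0" using Suc.prems(4) by blast
    then show "g (t + 1 + real s) > 0" by (simp add: add.assoc)
  qed
  then have "alt_legal b a r (sqrt (- a) * g (t + 1)) (- sqrt (- b) * g (t + 1 - 1))"
    using Suc.prems(1-3) by (intro Suc.IH) (simp_all add: mult.commute)
  moreover have "sqrt (- b) * g t > 0" using Suc.prems(2,4) by auto
  ultimately show ?case unfolding alt_legal.simps step_value by simp
qed simp

lemma sin_combination_pos: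
  assumes "s < k" "k \<ge> 2" "P > 0" "Q > 0"
  shows "P * sin ((real s + 1) * (pi / k)) + Q * sin (real s * (pi / k)) > 0"
proof -
  have k: "real k > 0" using assms(2) by simp
  have "(real s + 1) * pi \<le> real k * pi" "real s * pi < real k * pi" using assms(1) by auto
  then have le: "(real s + 1) * (pi / k) \<le> pi" and lt: "real s * (pi / k) < pi"
    using k by (simp_all add: field_simps)
  have s1: "sin ((real s + 1) * (pi / k)) \<ge> 0" using le k by (intro sin_ge_zero) auto
  have s0: "sin (real s * (pi / k)) \<ge> 0" using lt k by (intro sin_ge_zero) auto
  show ?thesis
  proof (cases "s + 1 < k")
    case True
    then have "(real s + 1) * pi < real k * pi" by simp
    then have "(real s + 1) * (pi / k) < pi" using k by (simp add: field_simps)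
    then have "sin ((real s + 1) * (pi / k)) > 0" using k by (intro sin_gt_zero) auto
    with assms s0 show ?thesis by (simp add: add_pos_nonneg)
  next
    case False
    with assms(1,2) have "s > 0" by linarith
    then have "sin (real s * (pi / k)) > 0" using lt k by (intro sin_gt_zero) auto
    with assms s1 show ?thesis by (simp add: add_nonneg_pos)
  qed
qed

text \<open>For \<open>a b = 4 cos\<^sup>2 (\<pi>/k)\<close> the populations along the alternating play are
  samples of the sine wave \<open>g\<close>, which stays positive for \<open>k\<close> steps.\<close>

lemma alt_legal_finite:
  assumes k: "k \<ge> 3" and ab: "a < 0" "b < 0" "a * b = 4 * (cos (pi / k))\<^sup>2"
    and uv: "u > 0" "v > 0"
  shows "alt_legal a b k u v"
proof -
  define \<phi> where "\<phi> = pi / k"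
  have "sin \<phi> > 0" using k by (intro sin_gt_zero) (auto simp: \<phi>_def field_simps)
  define P where "P = u / (sqrt (- b) * sin \<phi>)"
  define Q where "Q = v / (sqrt (- a) * sin \<phi>)"
  define g where "g t = P * sin ((t + 1) * \<phi>) + Q * sin (t * \<phi>)" for t
  have P: "P > 0" and Q: "Q > 0" using uv ab \<open>sin \<phi> > 0\<close> by (simp_all add: P_def Q_def)
  have rec: "g (t + 1) = 2 * cos \<phi> * g t - g (t - 1)" for t
  proof -
    have trig: "sin (x + \<phi>) = 2 * cos \<phi> * sin x - sin (x - \<phi>)" for x
      by (simp add: sin_add sin_diff algebra_simps)
    have arg: "(t + 1) * \<phi> + \<phi> = (t + 1 + 1) * \<phi>" "(t + 1) * \<phi> - \<phi> = t * \<phi>"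
      "t * \<phi> + \<phi> = (t + 1) * \<phi>" "t * \<phi> - \<phi> = (t - 1) * \<phi>"
      by (simp_all add: algebra_simps)
    have t1: "sin ((t + 1 + 1) * \<phi>) = 2 * cos \<phi> * sin ((t + 1) * \<phi>) - sin (t * \<phi>)"
      and t0: "sin ((t + 1) * \<phi>) = 2 * cos \<phi> * sin (t * \<phi>) - sin ((t - 1) * \<phi>)"
      using trig[of "(t + 1) * \<phi>"] trig[of "t * \<phi>"] by (simp_all only: arg)
    show ?thesis
      unfolding g_def t1 t0 diff_add_cancel by algebra
  qed
  have "sqrt (- a) * sqrt (- b) = sqrt ((2 * cos \<phi>)\<^sup>2)"
    using ab(3) by (simp add: \<phi>_def real_sqrt_mult[symmetric] power_mult_distrib)
  also have "\<dots> = \<bar>2 * cos \<phi>\<bar>" by (rule real_sqrt_abs)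
  also have "\<dots> = 2 * cos \<phi>" using cos_pi_div_nonneg[of k] k by (simp add: \<phi>_def)
  finally have sq: "sqrt (- a) * sqrt (- b) = 2 * cos \<phi>" .
  have u: "u = sqrt (- b) * g 0" and v: "v = - sqrt (- a) * g (0 - 1)"
    using \<open>sin \<phi> > 0\<close> ab by (simp_all add: g_def P_def Q_def)
  have "\<forall>s<k. g (0 + real s) > 0"
    using sin_combination_pos[OF _ _ P Q] k by (simp add: g_def \<phi>_def)
  then show ?thesis
    unfolding u v by (rule alt_legal_of_recurrence[OF rec ab(1,2) sq])
qed

section \<open>The numbers game is an action of the Coxeter group\<close>

locale egcm_coxeter = egcm_game n M + coxeter n m
  for n :: nat and M :: "nat \<Rightarrow> nat \<Rightarrow> real" and m :: "nat \<Rightarrow> nat \<Rightarrow> enat" +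
  assumes egcm_assoc: "egcm_assoc n M m"
begin

lemma m_finite:
  assumes "i < n" "j < n" "i \<noteq> j" "m i j = enat k"
  shows "k \<ge> 2" "M i j * M j i = 4 * (cos (pi / k))\<^sup>2"
  using egcm_assoc assms unfolding egcm_assoc_def by blast+

lemma m_infinite:
  assumes "i < n" "j < n" "i \<noteq> j" "m i j = \<infinity>"
  shows "M i j * M j i \<ge> 4"
  using egcm_assoc assms unfolding egcm_assoc_def by blast

lemma prod_less_4: "i < n \<Longrightarrow> j < n \<Longrightarrow> i \<noteq> j \<Longrightarrow> m i j = enat k \<Longrightarrow> M i j * M j i < 4"
  using m_finite[of i j k] cos_pi_div_sq_less_1[of k] by simp

lemma prod_pos_iff:
  assumes "i < n" "j < n" "i \<noteq> j"
  shows "M i j * M j i > 0 \<longleftrightarrow> m i j \<ge> 3"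
proof (cases "m i j")
  case (enat k)
  then have "k \<ge> 2" and prod: "M i j * M j i = 4 * (cos (pi / k))\<^sup>2"
    using m_finite[OF assms] by auto
  show ?thesis
  proof (cases "k = 2")
    case True
    then have "M i j * M j i = 0" using prod by simp
    then show ?thesis using True enat by (auto simp: numeral_eq_enat)
  next
    case False
    with \<open>k \<ge> 2\<close> have "k \<ge> 3" by simp
    then show ?thesis using prod enat cos_pi_div_pos[of k] by (simp add: numeral_eq_enat)
  qed
qed (use m_infinite[OF assms] in auto)

lemma both_neg_if_prod_pos:
  assumes "i < n" "j < n" "i \<noteq> j" "M i j * M j i > 0"
  shows "M i j < 0" "M j i < 0"
  using offdiag_nonpos[OF assms(1-3)] offdiag_nonpos[OF assms(2,1) assms(3)[symmetric]] assms(4)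
  by (auto simp: less_le)

lemma offdiag_zero_if_m_2:
  assumes "i < n" "j < n" "i \<noteq> j" "m i j = enat 2"
  shows "M i j = 0" "M j i = 0"
proof -
  have "M i j * M j i = 0" using m_finite(2)[OF assms] by simp
  moreover have "M i j = 0 \<longleftrightarrow> M j i = 0" using egcm assms(1-3) by (auto simp: egcm_def)
  ultimately show "M i j = 0" "M j i = 0" by auto
qed

lemma play_pair:
  assumes "i < n" "j < n" "i \<noteq> j"
  shows "play M v [i, j] = (\<lambda>l. v l - (M i l * v i + M j l * (v j - M i j * v i)))"
    and "(play M v [i, j] i, play M v [i, j] j) = rank2_step (M i j) (M j i) (v i, v j)"
  using assms by (auto simp: fire_def rank2_step_def fun_eq_iff algebra_simps)

lemma play_dihedral:
  assumes "i < n" "j < n" "i \<noteq> j"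
  defines "F p l \<equiv> M i l * fst p + M j l * (snd p - M i j * fst p)"
    and "T \<equiv> rank2_step (M i j) (M j i)"
  shows "play M v (concat (replicate t [i, j])) = (\<lambda>l. v l - (\<Sum>s<t. F ((T ^^ s) (v i, v j)) l))"
proof (induction t arbitrary: v)
  case (Suc t)
  let ?u = "play M v [i, j]"
  have "play M v (concat (replicate (Suc t) [i, j])) = play M ?u (concat (replicate t [i, j]))"
    by simp
  also have "\<dots> = (\<lambda>l. ?u l - (\<Sum>s<t. F ((T ^^ s) (T (v i, v j))) l))"
    unfolding Suc.IH T_def play_pair(2)[OF assms(1-3)] ..
  also have "\<dots> = (\<lambda>l. v l - (F ((T ^^ 0) (v i, v j)) l + (\<Sum>s<t. F ((T ^^ Suc s) (v i, v j)) l)))"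
    unfolding play_pair(1)[OF assms(1-3)] funpow_Suc_right comp_apply by (simp add: F_def diff_diff_eq)
  also have "\<dots> = (\<lambda>l. v l - (\<Sum>s<Suc t. F ((T ^^ s) (v i, v j)) l))"
    by (simp only: sum.lessThan_Suc_shift)
  finally show ?case .
qed simp

lemma play_dihedral_relator:
  assumes "i < n" "j < n" "i \<noteq> j" "m i j = enat k"
  shows "play M v (concat (replicate k [i, j])) = v"
proof -
  let ?T = "rank2_step (M i j) (M j i)"
  have "(?T ^^ k) (v i, v j) = (v i, v j)"
  proof (cases "k = 2")
    case True
    then show ?thesis
      using offdiag_zero_if_m_2[OF assms(1-3)] assms(4) by (simp add: rank2_step_def numeral_2_eq_2)
  next
    case False
    with m_finite[OF assms] show ?thesis by (intro rank2_step_funpow_period) auto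
  qed
  then have "(\<Sum>s<k. fst ((?T ^^ s) (v i, v j))) = 0" "(\<Sum>s<k. snd ((?T ^^ s) (v i, v j))) = 0"
    using rank2_step_period_sum_zero prod_less_4[OF assms] by auto
  then show ?thesis
    unfolding play_dihedral[OF assms(1-3)]
    by (simp add: sum.distrib sum_subtractf algebra_simps flip: sum_distrib_left)
qed

lemma play_relator: "r \<in> relators n m \<Longrightarrow> play M v r = v"
  unfolding relators_def using play_dihedral_relator by auto

lemma play_cox_rel: "(w, w') \<in> cox_rel n m \<Longrightarrow> play M v w = play M v w'"
proof -
  have step: "play M v w = play M v w'" if "(w, w') \<in> cox_step n m" for w w'
    using that by (auto simp: cox_step_def play_append play_relator)
  show "(w, w') \<in> cox_rel n m \<Longrightarrow> play M v w = play M v w'"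
    unfolding cox_rel_def
    by (induction rule: rtrancl_induct) (auto dest: step)
qed

lemma legal_play_alt_word:
  "i < n \<Longrightarrow> j < n \<Longrightarrow> i \<noteq> j
    \<Longrightarrow> legal_play n M v (alt_word i j k) \<longleftrightarrow> alt_legal (M i j) (M j i) k (v i) (v j)"
proof (induction k arbitrary: i j v)
  case (Suc k)
  then show ?case using Suc.IH[of j i "fire M i v"] by (simp add: fire_def)
qed simp

lemma legal_alt_word_infinite:
  assumes "i < n" "j < n" "i \<noteq> j" "m i j = \<infinity>" "v i > 0" "v j > 0"
  shows "legal_play n M v (alt_word i j t)"
proof -
  have "M i j * M j i > 0" using m_infinite[OF assms(1-4)] by simp
  then have "M i j < 0" "M j i < 0" using both_neg_if_prod_pos assms(1-3) by blast+
  then show ?thesis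
    unfolding legal_play_alt_word[OF assms(1-3)]
    using m_infinite[OF assms(1-4)] assms(5,6) by (intro alt_legal_infinite) auto
qed

lemma legal_alt_word_finite:
  assumes "i < n" "j < n" "i \<noteq> j" "m i j = enat k" "v i > 0" "v j > 0"
  shows "legal_play n M v (alt_word i j k)"
proof (cases "k = 2")
  case True
  then show ?thesis
    using offdiag_zero_if_m_2[OF assms(1-3)] assms
    by (simp add: legal_play_alt_word numeral_2_eq_2 fire_def)
next
  case False
  with m_finite[OF assms(1-4)] have k: "k \<ge> 3" by simp
  then have "M i j * M j i > 0" using prod_pos_iff[OF assms(1-3)] assms(4) by (simp add: numeral_eq_enat)
  then have "M i j < 0" "M j i < 0" using both_neg_if_prod_pos assms(1-3) by blast+
  then show ?thesis
    unfolding legal_play_alt_word[OF assms(1-3)]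
    using alt_legal_finite[OF k _ _ m_finite(2)[OF assms(1-4)]] assms(5,6) by simp
qed

end

section \<open>Strong convergence\<close>

context egcm_coxeter
begin

definition completes_plays :: "(nat \<Rightarrow> real) \<Rightarrow> nat list \<Rightarrow> bool" where
  "completes_plays v g \<longleftrightarrow> (\<forall>p. legal_play n M v p \<longrightarrow>
     length p \<le> length g \<and> (\<exists>r. legal_play n M v (p @ r) \<and> (p @ r, g) \<in> cox_rel n m))"

text \<open>Two distinct first moves \<open>i\<close>, \<open>j\<close> can be reconciled along the braid relation:
  the alternating play \<open>i j i \<dots>\<close> of length \<open>m\<^sub>i\<^sub>j\<close> is legal, and so is \<open>j i j \<dots>\<close>.\<close>

lemma exchange_first_move:
  assumes i: "i < n" "v i > 0" and j: "j < n" "v j > 0" "i \<noteq> j"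
    and g': "completes_plays (fire M i v) g'"
  obtains h where "legal_play n M (fire M j v) h" "length h \<le> length g'"
    "(j # h, i # g') \<in> cox_rel n m"
proof (cases "m i j")
  case infinity
  have "legal_play n M v (alt_word i j (Suc (Suc (length g'))))"
    using legal_alt_word_infinite[OF i(1) j(1,3) infinity i(2) j(2)] .
  then have "legal_play n M (fire M i v) (alt_word j i (Suc (length g')))" by simp
  with g' have "length (alt_word j i (Suc (length g'))) \<le> length g'"
    unfolding completes_plays_def by blast
  then show ?thesis by simp
next
  case (enat k)
  with m_finite(1)[OF i(1) j(1,3)] obtain K where k: "k = Suc K" by (cases k) auto
  have mji: "m j i = enat k" using m_sym[OF i(1) j(1,3)] enat by simp
  have "legal_play n M v (alt_word i j k)" by (rule legal_alt_word_finite[OF i(1) j(1,3) enat i(2) j(2)])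
  then have "legal_play n M (fire M i v) (alt_word j i K)" by (simp add: k)
  with g' obtain r where r: "legal_play n M (fire M i v) (alt_word j i K @ r)"
    "length (alt_word j i K @ r) \<le> length g'" "(alt_word j i K @ r, g') \<in> cox_rel n m"
    unfolding completes_plays_def by blast
  have braid: "(alt_word i j k, alt_word j i k) \<in> cox_rel n m"
    by (rule cox_rel_braid[OF i(1) j(1,3) enat])
  have "play M (fire M j v) (alt_word i j K) = play M (fire M i v) (alt_word j i K)"
    using play_cox_rel[OF braid, of v] by (simp add: k)
  moreover have "legal_play n M v (alt_word j i k)"
    by (rule legal_alt_word_finite[OF j(1) i(1) j(3)[symmetric] mji j(2) i(2)])
  ultimately have "legal_play n M (fire M j v) (alt_word i j K @ r)"
    using r(1) by (simp add: k legal_play_append)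
  moreover have "length (alt_word i j K @ r) \<le> length g'" using r(2) by simp
  moreover have "(j # alt_word i j K @ r, i # g') \<in> cox_rel n m"
  proof -
    have "set r \<subseteq> {..<n}" using legal_play_nodes[OF r(1)] by simp
    then have "(alt_word j i k @ r, alt_word i j k @ r) \<in> cox_rel n m"
      by (intro cox_rel_append_right cox_rel_sym[OF braid])
    moreover have "(i # alt_word j i K @ r, i # g') \<in> cox_rel n m"
      by (rule cox_rel_Cons[OF r(3) i(1)])
    ultimately show ?thesis by (auto simp: k intro: cox_rel_trans)
  qed
  ultimately show ?thesis by (rule that)
qed

theorem strong_convergence:
  assumes "legal_play n M v g" "terminal n (play M v g)"
  shows "completes_plays v g"
  using assms
proof (induction "length g" arbitrary: v g rule: less_induct)
  case less
  show ?case
    unfolding completes_plays_def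
  proof (intro allI impI)
    fix p assume p: "legal_play n M v p"
    show "length p \<le> length g \<and> (\<exists>r. legal_play n M v (p @ r) \<and> (p @ r, g) \<in> cox_rel n m)"
    proof (cases p)
      case Nil
      with less.prems(1) show ?thesis by auto
    next
      case (Cons j p')
      with p have j: "j < n" "v j > 0" and p': "legal_play n M (fire M j v) p'" by auto
      obtain i g' where g: "g = i # g'"
        using less.prems(2) j by (cases g) (auto simp: terminal_def)
      with less.prems have i: "i < n" "v i > 0" and g': "legal_play n M (fire M i v) g'"
        and "terminal n (play M (fire M i v) g')" by auto
      then have IH_i: "completes_plays (fire M i v) g'" using less.hyps g by simp
      obtain h where h: "legal_play n M (fire M j v) h" "length h \<le> length g'" "(j # h, g) \<in> cox_rel n m"
      proof (cases "i = j")
        case True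
        then show ?thesis using that g' g by auto
      next
        case False
        then show ?thesis using exchange_first_move[OF i j _ IH_i] that g by blast
      qed
      have "play M (fire M j v) h = play M v g" using play_cox_rel[OF h(3), of v] by simp
      then have "completes_plays (fire M j v) h"
        using less.hyps h(1,2) g less.prems(2) by simp
      with p' obtain r where r: "length p' \<le> length h" "legal_play n M (fire M j v) (p' @ r)"
        "(p' @ r, h) \<in> cox_rel n m"
        unfolding completes_plays_def by blast
      have "(j # p' @ r, g) \<in> cox_rel n m" using cox_rel_Cons[OF r(3) j(1)] h(3) by (rule cox_rel_trans)
      with r(1,2) h(2) j g Cons show ?thesis by auto
    qed
  qed
qed

lemma legal_play_length_le_terminal:
  "legal_play n M v g \<Longrightarrow> terminal n (play M v g) \<Longrightarrow> legal_play n M v p \<Longrightarrow> length p \<le> length g"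
  using strong_convergence by (auto simp: completes_plays_def)

text \<open>Played backwards, a legal play from a dominant \<open>v\<close> is a game from \<open>-(play v p)\<close> that
  stops at \<open>-v\<close>; strong convergence applied there trades a move at a negative node
  for a legal play.\<close>

lemma legal_play_extend_negative:
  assumes v: "\<forall>l<n. v l \<ge> 0" and p: "legal_play n M v p" and i: "i < n" "play M v p i < 0"
  obtains r where "legal_play n M v r" "(r, p @ [i]) \<in> cox_rel n m"
proof -
  let ?\<nu> = "- play M v p"
  have p_nodes: "set p \<subseteq> {..<n}" by (rule legal_play_nodes[OF p])
  have rev_p: "legal_play n M ?\<nu> (rev p)" by (rule legal_play_rev[OF p])
  have "play M ?\<nu> (rev p) = - v" by (simp add: play_uminus play_rev_cancel[OF p_nodes])
  then have "terminal n (play M ?\<nu> (rev p))" using v by (simp add: terminal_def)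
  moreover have "legal_play n M ?\<nu> [i]" using i by simp
  ultimately obtain r where r: "legal_play n M ?\<nu> (i # r)" "(i # r, rev p) \<in> cox_rel n m"
    using strong_convergence[OF rev_p] unfolding completes_plays_def by fastforce
  have "- play M ?\<nu> (i # r) = v"
    using play_cox_rel[OF r(2)] \<open>play M ?\<nu> (rev p) = - v\<close> by (simp add: fun_eq_iff)
  then have "legal_play n M v (rev r @ [i])" using legal_play_rev[OF r(1)] by simp
  then have "legal_play n M v (rev r)" by (simp add: legal_play_append)
  moreover have "(rev r, p @ [i]) \<in> cox_rel n m"
  proof -
    have r_nodes: "set r \<subseteq> {..<n}" using legal_play_nodes[OF r(1)] by simp
    have "(rev r @ [i], p) \<in> cox_rel n m" using cox_rel_rev[OF r(2)] by simp
    then have "((rev r @ [i]) @ [i], p @ [i]) \<in> cox_rel n m"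
      using i(1) by (intro cox_rel_append_right) auto
    moreover have "(rev r @ [i, i] @ [], rev r @ []) \<in> cox_rel n m"
      using i(1) r_nodes by (intro cox_rel_cancel) auto
    ultimately show ?thesis by (auto intro: cox_rel_trans cox_rel_sym)
  qed
  ultimately show ?thesis by (rule that)
qed

lemma orbit_reached_by_legal_play:
  assumes v: "\<forall>l<n. v l \<ge> 0"
  shows "set w \<subseteq> {..<n} \<Longrightarrow> \<exists>p. legal_play n M v p \<and> play M v p = play M v w"
proof (induction w rule: rev_induct)
  case (snoc i w)
  then have i: "i < n" and w: "set w \<subseteq> {..<n}" by auto
  from snoc.IH[OF w] obtain p where p: "legal_play n M v p" "play M v p = play M v w" by blast
  have target: "play M v (w @ [i]) = fire M i (play M v p)" using p(2) by (simp add: play_append)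
  consider "play M v p i > 0" | "play M v p i = 0" | "play M v p i < 0" by linarith
  then show ?case
  proof cases
    case 1
    with p(1) i have "legal_play n M v (p @ [i])" by (simp add: legal_play_append)
    then show ?thesis using target by (auto simp: play_append)
  next
    case 2
    then have "fire M i (play M v p) = play M v p" by (simp add: fire_def)
    then show ?thesis using p(1) target by auto
  next
    case 3
    obtain r where "legal_play n M v r" "(r, p @ [i]) \<in> cox_rel n m"
      by (rule legal_play_extend_negative[OF v p(1) i 3])
    then show ?thesis using target play_cox_rel by (auto simp: play_append)
  qed
qed (intro exI[of _ "[]"], simp)

lemma word_equiv_legal_play:
  assumes v: "\<forall>l<n. v l \<ge> 0" and generic: "\<And>w i. set w \<subseteq> {..<n} \<Longrightarrow> i < n \<Longrightarrow> play M v w i \<noteq> 0"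
  shows "set w \<subseteq> {..<n} \<Longrightarrow> \<exists>p. legal_play n M v p \<and> (w, p) \<in> cox_rel n m"
proof (induction w rule: rev_induct)
  case (snoc i w)
  then have i: "i < n" and w: "set w \<subseteq> {..<n}" by auto
  from snoc.IH[OF w] obtain p where p: "legal_play n M v p" "(w, p) \<in> cox_rel n m" by blast
  have wp: "(w @ [i], p @ [i]) \<in> cox_rel n m" using cox_rel_append_right[OF p(2)] i by simp
  have "play M v p i \<noteq> 0" using generic[OF legal_play_nodes[OF p(1)] i] .
  then consider "play M v p i > 0" | "play M v p i < 0" by linarith
  then show ?case
  proof cases
    case 1
    with p(1) i have "legal_play n M v (p @ [i])" by (simp add: legal_play_append)
    with wp show ?thesis by blast
  next
    case 2
    obtain r where "legal_play n M v r" "(r, p @ [i]) \<in> cox_rel n m"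
      by (rule legal_play_extend_negative[OF v p(1) i 2])
    with wp show ?thesis by (blast intro: cox_rel_trans cox_rel_sym)
  qed
qed (intro exI[of _ "[]"], simp)

end

section \<open>Finite Coxeter groups and admissibility\<close>

context egcm_coxeter
begin

lemma finite_game_group_if_finite_coxeter_group:
  assumes "finite (coxeter_group n m)"
  shows "finite game_group"
proof -
  let ?rep = "\<lambda>X v. play M v (SOME w. w \<in> X)"
  have "game_group \<subseteq> ?rep ` (lists {..<n} // cox_rel n m)"
  proof
    fix g assume "g \<in> game_group"
    then obtain w where w: "w \<in> lists {..<n}" and g: "g = (\<lambda>v. play M v w)"
      by (auto simp: game_group_def)
    let ?X = "cox_rel n m `` {w}"
    have "(w, SOME w'. w' \<in> ?X) \<in> cox_rel n m" using someI[of "\<lambda>w'. w' \<in> ?X" w] by simp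
    then have "?rep ?X = g" using play_cox_rel by (auto simp: g fun_eq_iff)
    moreover have "?X \<in> lists {..<n} // cox_rel n m" using w by (auto simp: quotient_def)
    ultimately show "g \<in> ?rep ` (lists {..<n} // cox_rel n m)" by blast
  qed
  moreover have "finite (?rep ` (lists {..<n} // cox_rel n m))"
    using assms by (simp add: coxeter_group_def)
  ultimately show ?thesis by (rule finite_subset)
qed

lemma finite_coxeter_group_if_finite_game_group:
  assumes fin: "finite game_group"
  shows "finite (coxeter_group n m)"
proof -
  obtain v where v: "\<forall>l<n. v l > 0"
    and generic: "\<And>w i. set w \<subseteq> {..<n} \<Longrightarrow> i < n \<Longrightarrow> play M v w i \<noteq> 0"
    using generic_vector_exists[OF fin] by blast
  let ?short = "{p. set p \<subseteq> {..<n} \<and> length p \<le> card (orbit v)}"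
  have "lists {..<n} // cox_rel n m \<subseteq> (\<lambda>p. cox_rel n m `` {p}) ` ?short"
  proof
    fix X assume "X \<in> lists {..<n} // cox_rel n m"
    then obtain w where w: "set w \<subseteq> {..<n}" "X = cox_rel n m `` {w}" by (auto simp: quotient_def)
    obtain p where p: "legal_play n M v p" "(w, p) \<in> cox_rel n m"
      using word_equiv_legal_play[OF _ generic w(1)] v by (auto simp: less_imp_le)
    have "X = cox_rel n m `` {p}"
      using p(2) w(2) by (auto intro: cox_rel_trans cox_rel_sym)
    moreover have "p \<in> ?short"
      using legal_play_nodes[OF p(1)] legal_play_length_less_card_orbit[OF fin p(1)] by simp
    ultimately show "X \<in> (\<lambda>p. cox_rel n m `` {p}) ` ?short" by blast
  qed
  moreover have "finite ?short" by (rule finite_lists_length_le) simp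
  ultimately show ?thesis unfolding coxeter_group_def by (meson finite_imageI finite_subset)
qed

lemma finite_game_group_if_admissible:
  assumes "admissible n M"
  shows "finite game_group"
proof -
  obtain v g where conn: "egcm_connected n M" and v: "\<forall>l<n. v l \<ge> 0" "\<exists>l<n. v l \<noteq> 0"
    and g: "legal_play n M v g" "terminal n (play M v g)"
    using assms by (auto simp: admissible_def convergent_game_def terminal_def)
  have "orbit v \<subseteq> (\<lambda>p. play M v p) ` {p. set p \<subseteq> {..<n} \<and> length p \<le> length g}"
  proof
    fix x assume "x \<in> orbit v"
    then obtain w where "set w \<subseteq> {..<n}" "x = play M v w" by (auto simp: orbit_def)
    with orbit_reached_by_legal_play[OF v(1)] obtain p where "legal_play n M v p" "play M v p = x"
      by metis
    with legal_play_length_le_terminal[OF g] legal_play_nodes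
    show "x \<in> (\<lambda>p. play M v p) ` {p. set p \<subseteq> {..<n} \<and> length p \<le> length g}" by blast
  qed
  moreover have "finite {p. set p \<subseteq> {..<n} \<and> length p \<le> length g}"
    by (rule finite_lists_length_le) simp
  ultimately have fin: "finite (orbit v)" by (meson finite_imageI finite_subset)
  obtain i0 where "i0 < n" "v i0 \<noteq> 0" using v(2) by blast
  with fin conn v(1) show ?thesis
    by (intro finite_game_group_if_orbit_separates[OF fin]) (blast intro: orbit_separates)
qed

lemma egcm_connected_if_irreducible:
  assumes "coxeter_irreducible n m"
  shows "egcm_connected n M"
proof -
  have adj: "egcm_adj n M i j" if "cox_adj n m i j" for i j
    using that prod_pos_iff[of i j] by (auto simp: cox_adj_def egcm_adj_def)
  have "(egcm_adj n M)\<^sup>*\<^sup>* i j" if "(cox_adj n m)\<^sup>*\<^sup>* i j" for i j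
    using that by (induction rule: rtranclp_induct) (auto intro: rtranclp.rtrancl_into_rtrancl adj)
  then show ?thesis using assms by (auto simp: egcm_connected_def coxeter_irreducible_def)
qed

theorem finite_coxeter_group_iff_admissible:
  assumes "coxeter_irreducible n m"
  shows "finite (coxeter_group n m) \<longleftrightarrow> admissible n M"
proof
  assume "finite (coxeter_group n m)"
  then have fin: "finite game_group" by (rule finite_game_group_if_finite_coxeter_group)
  have "0 < n" using assms by (simp add: coxeter_irreducible_def)
  obtain g where "legal_play n M (basis_vec 0) g" "terminal n (play M (basis_vec 0) g)"
    using terminal_play_exists[OF fin] by blast
  then show "admissible n M"
    using egcm_connected_if_irreducible[OF assms] \<open>0 < n\<close>
    unfolding admissible_def convergent_game_def terminal_def
    by (intro conjI exI[of _ "basis_vec 0"]) (auto simp: basis_vec_def)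
next
  assume "admissible n M"
  then show "finite (coxeter_group n m)"
    by (intro finite_coxeter_group_if_finite_game_group finite_game_group_if_admissible)
qed

end

section \<open>The cosine matrix\<close>

definition cosine_egcm :: "(nat \<Rightarrow> nat \<Rightarrow> enat) \<Rightarrow> nat \<Rightarrow> nat \<Rightarrow> real" where
  "cosine_egcm m i j =
    (if i = j then 2 else case m i j of enat k \<Rightarrow> - 2 * cos (pi / k) | \<infinity> \<Rightarrow> - 2)"

context coxeter
begin

lemma cosine_egcm_prod:
  "i < n \<Longrightarrow> j < n \<Longrightarrow> i \<noteq> j \<Longrightarrow> cosine_egcm m i j * cosine_egcm m j i
    = (case m i j of enat k \<Rightarrow> 4 * (cos (pi / k))\<^sup>2 | \<infinity> \<Rightarrow> 4)"
  using m_sym[of i j] by (auto simp: cosine_egcm_def power2_eq_square split: enat.split)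

lemma cosine_egcm_offdiag:
  assumes "i < n" "j < n" "i \<noteq> j"
  shows "cosine_egcm m i j \<le> 0" "cosine_egcm m i j = 0 \<longleftrightarrow> m i j = enat 2"
proof -
  have "cosine_egcm m i j \<le> 0 \<and> (cosine_egcm m i j = 0 \<longleftrightarrow> m i j = enat 2)"
  proof (cases "m i j")
    case (enat k)
    with m_ge_2[OF assms] have "k \<ge> 2" by simp
    then show ?thesis
      using enat assms cos_pi_div_nonneg[of k] cos_pi_div_pos[of k]
      by (cases "k = 2") (auto simp: cosine_egcm_def)
  qed (use assms in \<open>simp add: cosine_egcm_def\<close>)
  then show "cosine_egcm m i j \<le> 0" "cosine_egcm m i j = 0 \<longleftrightarrow> m i j = enat 2" by auto
qed

lemma egcm_cosine_egcm: "egcm n (cosine_egcm m)"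
  unfolding egcm_def
proof (intro conjI allI impI)
  fix i assume "i < n"
  then show "cosine_egcm m i i = 2" by (simp add: cosine_egcm_def)
next
  fix i j assume ij: "i < n" "j < n" "i \<noteq> j"
  then show "cosine_egcm m i j \<le> 0" by (rule cosine_egcm_offdiag)
next
  fix i j assume ij: "i < n" "j < n" "i \<noteq> j"
  then show "cosine_egcm m i j \<noteq> 0 \<longleftrightarrow> cosine_egcm m j i \<noteq> 0"
    using cosine_egcm_offdiag(2)[OF ij] cosine_egcm_offdiag(2)[OF ij(2,1) ij(3)[symmetric]] m_sym[OF ij]
    by simp
next
  fix i j assume ij: "i < n" "j < n" "i \<noteq> j"
    and "cosine_egcm m i j * cosine_egcm m j i \<noteq> 0"
  then have "m i j \<noteq> enat 2" using cosine_egcm_offdiag(2)[OF ij] by auto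
  show "4 \<le> cosine_egcm m i j * cosine_egcm m j i
    \<or> (\<exists>k::nat. 3 \<le> real k \<and> cosine_egcm m i j * cosine_egcm m j i = 4 * (cos (pi / k))\<^sup>2)"
  proof (cases "m i j")
    case (enat k)
    with \<open>m i j \<noteq> enat 2\<close> m_ge_2[OF ij] have "3 \<le> k" by (simp add: numeral_eq_enat)
    with cosine_egcm_prod[OF ij] enat show ?thesis by auto
  qed (use cosine_egcm_prod[OF ij] in simp)
qed

lemma egcm_assoc_cosine_egcm: "egcm_assoc n (cosine_egcm m) m"
  unfolding egcm_assoc_def
proof (intro allI impI conjI)
  fix i j assume ij: "i < n" "j < n" "i \<noteq> j"
  show "m i j = \<infinity> \<longleftrightarrow> 4 \<le> cosine_egcm m i j * cosine_egcm m j i"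
  proof (cases "m i j")
    case (enat k)
    with m_ge_2[OF ij] have "(cos (pi / k))\<^sup>2 < 1" by (intro cos_pi_div_sq_less_1) simp
    with cosine_egcm_prod[OF ij] enat show ?thesis by simp
  qed (use cosine_egcm_prod[OF ij] in simp)
next
  fix i j k assume ij: "i < n" "j < n" "i \<noteq> j" and k: "m i j = enat k"
  show "2 \<le> k" using m_ge_2[OF ij] k by simp
  show "cosine_egcm m i j * cosine_egcm m j i = 4 * (cos (pi / k))\<^sup>2"
    using cosine_egcm_prod[OF ij] k by simp
qed

end

theorem corollary4p1:
  fixes n :: nat and m :: "nat \<Rightarrow> nat \<Rightarrow> enat"
  assumes "coxeter_matrix n m" and "coxeter_irreducible n m"
  shows "(finite (coxeter_group n m) \<longleftrightarrow>
            (\<exists>M. egcm n M \<and> egcm_assoc n M m \<and> admissible n M))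
       \<and> (finite (coxeter_group n m) \<longleftrightarrow>
            (\<forall>M. egcm n M \<and> egcm_assoc n M m \<longrightarrow> admissible n M))"
proof -
  have iff: "finite (coxeter_group n m) \<longleftrightarrow> admissible n M" if "egcm n M" "egcm_assoc n M m" for M
  proof -
    interpret egcm_coxeter n M m using that assms(1) by unfold_locales
    show ?thesis using finite_coxeter_group_iff_admissible[OF assms(2)] .
  qed
  interpret coxeter n m using assms(1) by unfold_locales
  show ?thesis using iff egcm_cosine_egcm egcm_assoc_cosine_egcm by blast
qed

end
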